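(* Assume that in any packing of unit balls in $\mathbb{E}^3$, whenever $14$ different members $\mathbf{B}_1,\dots,\mathbf{B}_{14}$ are such that each of $\mathbf{B}_2,\dots,\mathbf{B}_{13}$ touches $\mathbf{B}_1$, the centers of $\mathbf{B}_1$ and $\mathbf{B}_{14}$ are at distance at least $2.52$. Then: if $\mathbf{B}_1,\dots,\mathbf{B}_{13}$ are $13$ different members of a packing of unit balls in $\mathbb{E}^3$ with each of $\mathbf{B}_2,\dots,\mathbf{B}_{13}$ touching $\mathbf{B}_1$, and $\hat{\mathbf{B}}_i$ is the closed ball of radius $\hat r:=1.58731$ concentric with $\mathbf{B}_i$, then $$\mathrm{bd}(\hat{\mathbf{B}}_1)\subset\bigcup_{j=2}^{13}\hat{\mathbf{B}}_j.$$
   Context: A packing of unit balls is a family of closed unit balls in $\mathbb{E}^3$ with pairwise disjoint interiors; two balls touch if their centers are at distance $2$. $\mathrm{bd}$ denotes boundary. *)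

theory Defs
  imports "HOL-Analysis.Analysis"
begin

definition unit_ball_packing :: "(real^3) set set \<Rightarrow> bool" where
  "unit_ball_packing P \<longleftrightarrow>
     (\<forall>B\<in>P. \<exists>c. B = cball c 1) \<and>
     (\<forall>B\<in>P. \<forall>B'\<in>P. B \<noteq> B' \<longrightarrow> interior B \<inter> interior B' = {})"

definition r_hat :: real where "r_hat = 1.58731"

end

theory Submission
  imports Defs
begin

(* Suppose a point x of the sphere of radius r_hat about c 1 is not covered
   by the enlarged balls cball (c j) r_hat, j = 2..13.  Invert x in the sphere of radius 2
   about c 1: the image y = c 1 + (2/r_hat)^2 (x - c 1) lies at distance 4/r_hat from c 1,
   which is in [2, 2.52), and, because every touching centre c j lies on the inversion sphere
   while x is farther than r_hat from it, y is farther than 2 from every c j.  Hence the unit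
   ball about y can be added to the 13 given balls, giving a packing of 14 balls whose 14th
   centre is closer than 2.52 to c 1, contradicting the hypothesis. *)

lemma inversion_moves_away:
  fixes a b x :: "'a::real_inner"
  assumes b: "dist a b = \<rho>" and x: "dist a x = r" and r: "r > 0" and far: "dist b x > r"
  shows "dist b (a + (\<rho>/r)^2 *\<^sub>R (x - a)) > \<rho>"
proof -
  define d w k where "d = x - a" and "w = b - a" and "k = (\<rho>/r)^2"
  have dd: "d \<bullet> d = r^2" and ww: "w \<bullet> w = \<rho>^2"
    using x b by (simp_all add: d_def w_def dist_norm norm_minus_commute
        flip: power2_norm_eq_inner)
  have "r^2 < (norm (d - w))^2"
    using far r by (simp add: d_def w_def dist_norm norm_minus_commute power_strict_mono)
  also have "\<dots> = d \<bullet> d - 2 * (d \<bullet> w) + w \<bullet> w"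
    by (simp add: power2_norm_eq_inner inner_diff_left inner_diff_right inner_commute)
  finally have dw: "2 * (d \<bullet> w) < \<rho>^2"
    using dd ww by linarith
  have "\<rho> \<noteq> 0"
    using b x far by auto
  hence k_pos: "k > 0"
    using r by (simp add: k_def)
  have kr: "k^2 * r^2 = k * \<rho>^2"
    using r by (simp add: k_def power_divide power2_eq_square)
  have "(norm (k *\<^sub>R d - w))^2 = k^2 * (d \<bullet> d) - 2 * k * (d \<bullet> w) + w \<bullet> w"
    unfolding power2_norm_eq_inner
    by (simp add: inner_diff_left inner_diff_right inner_commute power2_eq_square algebra_simps)
  also have "\<dots> = k * (\<rho>^2 - 2 * (d \<bullet> w)) + \<rho>^2"
    using dd ww kr by (simp add: algebra_simps)
  also have "\<dots> > \<rho>^2"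
    using dw k_pos by simp
  finally have "\<rho>^2 < (norm (k *\<^sub>R d - w))^2" .
  hence "\<rho> < norm (k *\<^sub>R d - w)"
    by (meson norm_ge_zero power_less_imp_less_base)
  also have "norm (k *\<^sub>R d - w) = dist b (a + k *\<^sub>R d)"
    by (simp add: d_def w_def dist_norm norm_minus_commute algebra_simps)
  finally show ?thesis
    by (simp add: d_def k_def)
qed

lemma inversion_of_uncovered_point:
  fixes a x :: "'a::real_inner" and b :: "'i \<Rightarrow> 'a"
  assumes on_sphere: "\<forall>j\<in>J. dist a (b j) = 2"
    and x: "dist a x = r" and r: "r > 0"
    and uncovered: "x \<notin> (\<Union>j\<in>J. cball (b j) r)"
  defines "y \<equiv> a + (2 / r)^2 *\<^sub>R (x - a)"
  shows "dist a y = 4 / r" and "\<forall>j\<in>J. dist (b j) y > 2"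
proof -
  have "dist a y = (2 / r)^2 * dist x a"
    by (simp add: y_def dist_norm)
  thus "dist a y = 4 / r"
    using x r by (simp add: dist_commute power2_eq_square)
  show "\<forall>j\<in>J. dist (b j) y > 2"
  proof
    fix j assume j: "j \<in> J"
    hence "x \<notin> cball (b j) r"
      using uncovered by blast
    hence "dist (b j) x > r"
      by simp
    thus "dist (b j) y > 2"
      using inversion_moves_away[of a "b j" 2 x r] on_sphere j x r by (simp add: y_def)
  qed
qed

lemma unit_ball_packing_subset:
  assumes "unit_ball_packing Q" and "P \<subseteq> Q"
  shows "unit_ball_packing P"
  using assms unfolding unit_ball_packing_def by (meson subsetD)

lemma unit_ball_packing_insert:
  assumes packing: "unit_ball_packing P"
    and apart: "\<And>a. cball a 1 \<in> P \<Longrightarrow> dist a y \<ge> 2"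
  shows "unit_ball_packing (insert (cball y 1) P)"
proof -
  have shape: "\<And>B. B \<in> P \<Longrightarrow> \<exists>a. B = cball a 1"
    and old_disjoint: "\<And>B B'. B \<in> P \<Longrightarrow> B' \<in> P \<Longrightarrow> B \<noteq> B' \<Longrightarrow>
      interior B \<inter> interior B' = {}"
    using packing unfolding unit_ball_packing_def by auto
  have new_disjoint: "interior (cball y 1) \<inter> interior B = {}" if "B \<in> P" for B
  proof -
    obtain a where B: "B = cball a 1"
      using shape \<open>B \<in> P\<close> by blast
    have "ball y 1 \<inter> ball a 1 = {}"
      using disjoint_ballI[of 1 1 y a] apart \<open>B \<in> P\<close> B by (simp add: dist_commute)
    thus ?thesis
      using B by simp
  qed
  show ?thesis
    unfolding unit_ball_packing_def
  proof (intro conjI ballI impI)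
    fix B assume "B \<in> insert (cball y 1) P"
    thus "\<exists>a. B = cball a 1"
      using shape by blast
  next
    fix B B' assume B: "B \<in> insert (cball y 1) P" and B': "B' \<in> insert (cball y 1) P"
      and different: "B \<noteq> B'"
    consider "B = cball y 1" "B' \<in> P" | "B' = cball y 1" "B \<in> P" | "B \<in> P" "B' \<in> P"
      using B B' different by blast
    thus "interior B \<inter> interior B' = {}"
    proof cases
      case 1 thus ?thesis using new_disjoint by simp
    next
      case 2 thus ?thesis using new_disjoint by (simp add: Int_commute)
    next
      case 3 thus ?thesis using old_disjoint different by simp
    qed
  qed
qed

lemma extend_family_by_ball:
  fixes c :: "'i \<Rightarrow> real^3"
  assumes packing: "unit_ball_packing P"
    and members: "\<forall>i\<in>I. cball (c i) 1 \<in> P"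
    and different: "inj_on (\<lambda>i. cball (c i) 1) I"
    and new_index: "k \<notin> I"
    and apart: "\<forall>i\<in>I. dist (c i) y \<ge> 2"
  defines "P' \<equiv> insert (cball y 1) ((\<lambda>i. cball (c i) 1) ` I)" and "c' \<equiv> c(k := y)"
  shows "unit_ball_packing P'"
    and "\<forall>i\<in>insert k I. cball (c' i) 1 \<in> P'"
    and "inj_on (\<lambda>i. cball (c' i) 1) (insert k I)"
proof -
  have "(\<lambda>i. cball (c i) 1) ` I \<subseteq> P"
    using members by auto
  with packing have "unit_ball_packing ((\<lambda>i. cball (c i) 1) ` I)"
    by (rule unit_ball_packing_subset)
  moreover have "dist a y \<ge> 2" if a: "cball a 1 \<in> (\<lambda>i. cball (c i) 1) ` I" for a
  proof -
    obtain i where "i \<in> I" and "cball a 1 = cball (c i) 1"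
      using a by blast
    thus ?thesis
      using apart by (simp add: cball_eq_cball_iff)
  qed
  ultimately show "unit_ball_packing P'"
    unfolding P'_def by (rule unit_ball_packing_insert)
  show "\<forall>i\<in>insert k I. cball (c' i) 1 \<in> P'"
    using new_index by (auto simp: c'_def P'_def)
  have "inj_on (\<lambda>i. cball (c' i) 1) I"
    using different new_index unfolding inj_on_def c'_def by auto
  moreover have "cball (c' k) 1 \<notin> (\<lambda>i. cball (c' i) 1) ` (I - {k})"
  proof
    assume "cball (c' k) 1 \<in> (\<lambda>i. cball (c' i) 1) ` (I - {k})"
    then obtain i where i: "i \<in> I" "i \<noteq> k" and "cball (c' k) 1 = cball (c' i) 1"
      by blast
    hence "y = c i"
      by (simp add: c'_def cball_eq_cball_iff)
    thus False
      using apart i by force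
  qed
  ultimately show "inj_on (\<lambda>i. cball (c' i) 1) (insert k I)"
    by simp
qed

theorem mainTheorem12:
  assumes hyp: "\<And>(P :: (real^3) set set) (c :: nat \<Rightarrow> real^3).
      unit_ball_packing P \<Longrightarrow>
      (\<forall>i\<in>{1..14}. cball (c i) 1 \<in> P) \<Longrightarrow>
      inj_on (\<lambda>i. cball (c i) 1) {1..14} \<Longrightarrow>
      (\<forall>j\<in>{2..13}. dist (c 1) (c j) = 2) \<Longrightarrow>
      dist (c 1) (c 14) \<ge> 2.52"
    and packing: "unit_ball_packing P"
    and members: "\<forall>i\<in>{1..13::nat}. cball (c i) 1 \<in> P"
    and different: "inj_on (\<lambda>i. cball (c i) 1) {1..13::nat}"
    and touching: "\<forall>j\<in>{2..13::nat}. dist (c 1) (c j) = 2"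
  shows "sphere (c 1) r_hat \<subseteq> (\<Union>j\<in>{2..13::nat}. cball (c j) r_hat)"
proof
  fix x assume x: "x \<in> sphere (c 1) r_hat"
  show "x \<in> (\<Union>j\<in>{2..13::nat}. cball (c j) r_hat)"
  proof (rule ccontr)
    assume uncovered: "x \<notin> (\<Union>j\<in>{2..13::nat}. cball (c j) r_hat)"
    define y where "y = c 1 + (2 / r_hat)^2 *\<^sub>R (x - c 1)"
    have r_hat: "r_hat > 0" "2 \<le> 4 / r_hat" "4 / r_hat < 2.52"
      by (simp_all add: r_hat_def)
    have dist_y: "dist (c 1) y = 4 / r_hat" and far: "\<forall>j\<in>{2..13}. dist (c j) y > 2"
      using inversion_of_uncovered_point[OF touching _ r_hat(1) uncovered] x
      unfolding y_def by simp_all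
    have apart: "\<forall>i\<in>{1..13}. dist (c i) y \<ge> 2"
    proof
      fix i :: nat assume "i \<in> {1..13}"
      hence "i = 1 \<or> i \<in> {2..13}" by auto
      thus "dist (c i) y \<ge> 2"
        using dist_y r_hat(2) far by (auto intro: less_imp_le)
    qed
    have range: "{1..14::nat} = insert 14 {1..13}" and new_index: "(14::nat) \<notin> {1..13}"
      by auto
    note extended = extend_family_by_ball[OF packing members different new_index apart,
        folded range]
    have "\<forall>j\<in>{2..13}. dist ((c(14 := y)) 1) ((c(14 := y)) j) = 2"
      using touching by simp
    with extended have "dist ((c(14 := y)) 1) ((c(14 := y)) 14) \<ge> 2.52"
      by (rule hyp)
    thus False
      using dist_y r_hat(3) by simp
  qed
qed

end
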